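(* Let $(C,S)$ be a right-angled Coxeter system, $D>0$, and $\alpha,\beta\in C$ such that $\gamma=\alpha^{-1}\beta$ is nontrivial and has $D$-bounded product projections. Then there is a minimal wall $W$ in $\mathbf{W}(\alpha,\beta)$ such that $W\cap W'\ne\emptyset$ for at most $(2D+1)\cdot4^D$ walls $W'\in\mathbf{W}(\alpha,\beta)$.
   Context: Walls: for a reflection $r$ of $C$ (conjugate of a generator), the set of edges $\{g,gs\}$ of $\mathrm{Cay}(C,S)$ with $gsg^{-1}=r$ (hyperplanes of the Davis complex); two walls intersect if the hyperplanes intersect. $\mathbf{W}(\alpha,\beta)$ is the set of walls separating $\alpha$ from $\beta$ (every edge path from $\alpha$ to $\beta$ uses an edge of the wall), partially ordered by $W<W'$ iff $W$ separates $\alpha$ from $W'$; $\mathbf{W}(\gamma)=\mathbf{W}(\mathrm{id},\gamma)$. $\gamma$ has $D$-bounded product projections if every pair of disjoint subsets $A,B\subset\mathbf{W}(\gamma)$ with every element of $A$ incomparable to every element of $B$ satisfies $\min(|A|,|B|)\le D$. *)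

theory Defs
  imports Complex_Main
begin

text \<open>Group elements are equivalence classes of words over S
  modulo the relations s s = 1 and s t = t s for E s t.\<close>

inductive rac_step :: "'a set \<Rightarrow> ('a \<Rightarrow> 'a \<Rightarrow> bool) \<Rightarrow> 'a list \<Rightarrow> 'a list \<Rightarrow> bool"
  for S E where
  del: "s \<in> S \<Longrightarrow> rac_step S E (u @ [s, s] @ v) (u @ v)"
| swap: "s \<in> S \<Longrightarrow> t \<in> S \<Longrightarrow> E s t \<Longrightarrow> rac_step S E (u @ [s, t] @ v) (u @ [t, s] @ v)"

definition rac_eq :: "'a set \<Rightarrow> ('a \<Rightarrow> 'a \<Rightarrow> bool) \<Rightarrow> 'a list \<Rightarrow> 'a list \<Rightarrow> bool" where
  "rac_eq S E = (symclp (rac_step S E))\<^sup>*\<^sup>*"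

definition elt :: "'a set \<Rightarrow> ('a \<Rightarrow> 'a \<Rightarrow> bool) \<Rightarrow> 'a list \<Rightarrow> 'a list set" where
  "elt S E w = {v. rac_eq S E w v}"

definition RAC :: "'a set \<Rightarrow> ('a \<Rightarrow> 'a \<Rightarrow> bool) \<Rightarrow> 'a list set set" where
  "RAC S E = {elt S E w | w. set w \<subseteq> S}"

definition right_angled_coxeter :: "'a set \<Rightarrow> ('a \<Rightarrow> 'a \<Rightarrow> bool) \<Rightarrow> bool" where
  "right_angled_coxeter S E \<longleftrightarrow>
     (\<forall>s\<in>S. \<forall>t\<in>S. E s t \<longleftrightarrow> E t s) \<and> (\<forall>s\<in>S. \<not> E s s)"

definition cay_adj :: "'a set \<Rightarrow> ('a \<Rightarrow> 'a \<Rightarrow> bool) \<Rightarrow> 'a list set \<Rightarrow> 'a list set \<Rightarrow> bool" where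
  "cay_adj S E g h \<longleftrightarrow>
     (\<exists>w s. set w \<subseteq> S \<and> s \<in> S \<and> g = elt S E w \<and> h = elt S E (w @ [s]))"

definition cay_path :: "'a set \<Rightarrow> ('a \<Rightarrow> 'a \<Rightarrow> bool) \<Rightarrow> 'a list set list \<Rightarrow> 'a list set \<Rightarrow> 'a list set \<Rightarrow> bool" where
  "cay_path S E p x y \<longleftrightarrow> p \<noteq> [] \<and> hd p = x \<and> last p = y \<and>
     (\<forall>i < length p - 1. cay_adj S E (p ! i) (p ! Suc i))"

definition path_edges :: "'b list \<Rightarrow> 'b set set" where
  "path_edges p = {{p ! i, p ! Suc i} | i. i < length p - 1}"

text \<open>Reflections: conjugates g s g^{-1} of generators (the inverse of a word is its reverse).\<close>
definition reflection :: "'a set \<Rightarrow> ('a \<Rightarrow> 'a \<Rightarrow> bool) \<Rightarrow> 'a list set \<Rightarrow> bool" where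
  "reflection S E r \<longleftrightarrow> (\<exists>w s. set w \<subseteq> S \<and> s \<in> S \<and> r = elt S E (w @ [s] @ rev w))"

definition wall :: "'a set \<Rightarrow> ('a \<Rightarrow> 'a \<Rightarrow> bool) \<Rightarrow> 'a list set \<Rightarrow> 'a list set set set" where
  "wall S E r = {{elt S E w, elt S E (w @ [s])} | w s.
      set w \<subseteq> S \<and> s \<in> S \<and> elt S E (w @ [s] @ rev w) = r}"

definition walls :: "'a set \<Rightarrow> ('a \<Rightarrow> 'a \<Rightarrow> bool) \<Rightarrow> 'a list set set set set" where
  "walls S E = {wall S E r | r. reflection S E r}"

definition separates :: "'a set \<Rightarrow> ('a \<Rightarrow> 'a \<Rightarrow> bool) \<Rightarrow> 'a list set set set \<Rightarrow> 'a list set \<Rightarrow> 'a list set \<Rightarrow> bool" where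
  "separates S E W x y \<longleftrightarrow> (\<forall>p. cay_path S E p x y \<longrightarrow> (\<exists>e \<in> path_edges p. e \<in> W))"

definition Wsep :: "'a set \<Rightarrow> ('a \<Rightarrow> 'a \<Rightarrow> bool) \<Rightarrow> 'a list set \<Rightarrow> 'a list set \<Rightarrow> 'a list set set set set" where
  "Wsep S E x y = {W \<in> walls S E. separates S E W x y}"

definition wall_less :: "'a set \<Rightarrow> ('a \<Rightarrow> 'a \<Rightarrow> bool) \<Rightarrow> 'a list set \<Rightarrow> 'a list set set set \<Rightarrow> 'a list set set set \<Rightarrow> bool" where
  "wall_less S E x W W' \<longleftrightarrow> W \<noteq> W' \<and> (\<forall>e \<in> W'. \<forall>v \<in> e. separates S E W x v)"

definition incomparable :: "'a set \<Rightarrow> ('a \<Rightarrow> 'a \<Rightarrow> bool) \<Rightarrow> 'a list set \<Rightarrow> 'a list set set set \<Rightarrow> 'a list set set set \<Rightarrow> bool" where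
  "incomparable S E x W W' \<longleftrightarrow> \<not> wall_less S E x W W' \<and> \<not> wall_less S E x W' W"

text \<open>D-bounded product projections for gamma, with W(gamma) = W(id, gamma).\<close>
definition bounded_product_projections ::
  "'a set \<Rightarrow> ('a \<Rightarrow> 'a \<Rightarrow> bool) \<Rightarrow> real \<Rightarrow> 'a list set \<Rightarrow> bool" where
  "bounded_product_projections S E D \<gamma> \<longleftrightarrow>
     (\<forall>A B. A \<subseteq> Wsep S E (elt S E []) \<gamma> \<and> B \<subseteq> Wsep S E (elt S E []) \<gamma> \<and> A \<inter> B = {} \<and>
        (\<forall>a\<in>A. \<forall>b\<in>B. incomparable S E (elt S E []) a b) \<longrightarrow>
        real (min (card A) (card B)) \<le> D)"

text \<open>Hyperplanes of walls intersect: equal, or the walls cross (all four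
  quadrants of the two pairs of complementary halfspaces are nonempty).\<close>
definition walls_cross :: "'a set \<Rightarrow> ('a \<Rightarrow> 'a \<Rightarrow> bool) \<Rightarrow> 'a list set set set \<Rightarrow> 'a list set set set \<Rightarrow> bool" where
  "walls_cross S E W W' \<longleftrightarrow>
     (\<exists>x00 x01 x10 x11. x00 \<in> RAC S E \<and> x01 \<in> RAC S E \<and> x10 \<in> RAC S E \<and> x11 \<in> RAC S E \<and>
        \<not> separates S E W x00 x01 \<and> \<not> separates S E W x10 x11 \<and>
        separates S E W x00 x10 \<and> separates S E W x01 x11 \<and>
        \<not> separates S E W' x00 x10 \<and> \<not> separates S E W' x01 x11 \<and>
        separates S E W' x00 x01 \<and> separates S E W' x10 x11)"

definition walls_intersect :: "'a set \<Rightarrow> ('a \<Rightarrow> 'a \<Rightarrow> bool) \<Rightarrow> 'a list set set set \<Rightarrow> 'a list set set set \<Rightarrow> bool" where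
  "walls_intersect S E W W' \<longleftrightarrow> W = W' \<or> walls_cross S E W W'"

end

theory Submission
  imports Defs
begin

text \<open>
  The wall of a reflection \<open>r\<close> separates two elements exactly when \<open>r\<close> occurs an odd
  number of times in the sequence of reflections crossed by a word leading from one to the
  other. On a geodesic word these reflections are distinct; this gives finiteness of
  \<open>\<^bold>W(\<alpha>, \<beta>)\<close> and shows that "\<open>W\<close> separates \<open>\<alpha>\<close> from \<open>W'\<close>" is a strict partial order in which
  crossing walls are incomparable. Left translation by \<open>\<alpha>\<inverse>\<close> carries \<open>\<^bold>W(\<alpha>, \<beta>)\<close> with this
  order onto \<open>\<^bold>W(\<gamma>)\<close>, so any two disjoint mutually incomparable families of walls have
  the smaller one of size at most \<open>d = \<lfloor>D\<rfloor>\<close>.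

  In such a finite order there are at most \<open>2d + 1\<close> minimal elements. Group the elements
  according to the set of minimal elements below them: the groups with more than \<open>d\<close>
  elements form a chain, so some minimal \<open>m\<close> lies below all their elements. Every wall not
  above \<open>m\<close>, in particular every wall crossing \<open>m\<close>, is then \<open>m\<close> itself or lies in a small
  group over a set of minimal elements avoiding \<open>m\<close>; there are at most \<open>4\<^sup>d\<close> such sets,
  giving at most \<open>1 + d 4\<^sup>d \<le> (2d + 1) 4\<^sup>d\<close> walls.
\<close>

lemma count_list_distinct: "distinct xs \<Longrightarrow> count_list xs x = (if x \<in> set xs then 1 else 0)"
  by (induction xs) auto

lemma path_edges_iff: "e \<in> path_edges p \<longleftrightarrow> (\<exists>j < length p - 1. e = {p ! j, p ! Suc j})"
  unfolding path_edges_def by blast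

lemma edge_in_path_edges: "j < length p - 1 \<Longrightarrow> {p ! j, p ! Suc j} \<in> path_edges p"
  unfolding path_edges_def by blast


section \<open>Finite strict orders with bounded products\<close>

locale bounded_products =
  fixes T :: "'w set" and prec :: "'w \<Rightarrow> 'w \<Rightarrow> bool" (infix "\<prec>" 50) and d :: nat
  assumes finite_T: "finite T"
    and irrefl: "x \<in> T \<Longrightarrow> \<not> x \<prec> x"
    and trans: "x \<in> T \<Longrightarrow> y \<in> T \<Longrightarrow> z \<in> T \<Longrightarrow> x \<prec> y \<Longrightarrow> y \<prec> z \<Longrightarrow> x \<prec> z"
    and products: "A \<subseteq> T \<Longrightarrow> B \<subseteq> T \<Longrightarrow> A \<inter> B = {} \<Longrightarrow>
      (\<forall>a\<in>A. \<forall>b\<in>B. \<not> a \<prec> b \<and> \<not> b \<prec> a) \<Longrightarrow> min (card A) (card B) \<le> d"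
begin

definition minimals :: "'w set" where
  "minimals = {m \<in> T. \<forall>y\<in>T. \<not> y \<prec> m}"

definition minimals_below :: "'w \<Rightarrow> 'w set" where
  "minimals_below x = {m \<in> minimals. m = x \<or> m \<prec> x}"

definition fibre :: "'w set \<Rightarrow> 'w set" where
  "fibre K = {x \<in> T. minimals_below x = K}"

lemma minimals_subset: "minimals \<subseteq> T"
  by (auto simp: minimals_def)

lemma finite_minimals: "finite minimals"
  using finite_T minimals_subset by (rule finite_subset[rotated])

lemma minimals_below_subset: "minimals_below x \<subseteq> minimals"
  by (auto simp: minimals_below_def)

lemma minimals_below_mono: "x \<in> T \<Longrightarrow> y \<in> T \<Longrightarrow> x \<prec> y \<Longrightarrow> minimals_below x \<subseteq> minimals_below y"
  using trans minimals_subset unfolding minimals_below_def by blast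

lemma minimals_below_nonempty:
  assumes "x \<in> T"
  shows "minimals_below x \<noteq> {}"
proof -
  define R where "R = {(y, x). x \<in> T \<and> y \<in> T \<and> y \<prec> x}"
  have "R \<subseteq> T \<times> T" by (auto simp: R_def)
  then have "finite R" using finite_T by (simp add: finite_subset)
  moreover have "trans R" using trans by (auto simp: R_def intro: transI)
  then have "acyclic R" using irrefl by (auto simp: acyclic_def R_def trancl_id)
  ultimately have "wf R" by (rule finite_acyclic_wf)
  then show ?thesis using assms
  proof (induction x)
    case (less x)
    show ?case
    proof (cases "x \<in> minimals")
      case False
      then obtain y where y: "y \<in> T" "y \<prec> x" using less.prems by (auto simp: minimals_def)
      then have "minimals_below y \<noteq> {}" using less.IH less.prems by (auto simp: R_def)
      then show ?thesis using minimals_below_mono[OF y(1) less.prems y(2)] by blast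
    qed (auto simp: minimals_below_def)
  qed
qed

lemma card_minimals: "card minimals \<le> 2 * d + 1"
proof -
  obtain A where A: "A \<subseteq> minimals" "card A = card minimals div 2"
    using obtain_subset_with_card_n[of "card minimals div 2" minimals] by auto
  have "min (card A) (card (minimals - A)) \<le> d"
    using A(1) minimals_subset by (intro products) (auto simp: minimals_def)
  moreover have "card (minimals - A) = card minimals - card minimals div 2"
    using A finite_minimals by (simp add: card_Diff_subset finite_subset)
  ultimately show ?thesis using A(2) by linarith
qed

text \<open>Elements of two fibres over non-nested sets of minimal elements are incomparable.\<close>

lemma large_fibres_chain:
  assumes "x \<in> T" "y \<in> T" "d < card (fibre (minimals_below x))" "d < card (fibre (minimals_below y))"
  shows "minimals_below x \<subseteq> minimals_below y \<or> minimals_below y \<subseteq> minimals_below x"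
proof (rule ccontr)
  assume nested: "\<not> ?thesis"
  have "min (card (fibre (minimals_below x))) (card (fibre (minimals_below y))) \<le> d"
  proof (rule products)
    show "fibre (minimals_below x) \<subseteq> T" "fibre (minimals_below y) \<subseteq> T"
      by (auto simp: fibre_def)
    show "fibre (minimals_below x) \<inter> fibre (minimals_below y) = {}"
      using nested by (auto simp: fibre_def)
    show "\<forall>a\<in>fibre (minimals_below x). \<forall>b\<in>fibre (minimals_below y). \<not> a \<prec> b \<and> \<not> b \<prec> a"
      using nested minimals_below_mono unfolding fibre_def by blast
  qed
  then show False using assms(3,4) by simp
qed

lemma obtain_minimal_in_large_fibres:
  assumes "T \<noteq> {}"
  obtains m where "m \<in> minimals"
    and "\<And>x. x \<in> T \<Longrightarrow> d < card (fibre (minimals_below x)) \<Longrightarrow> m \<in> minimals_below x"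
proof (cases "\<exists>x\<in>T. d < card (fibre (minimals_below x))")
  case True
  let ?large = "\<lambda>x. x \<in> T \<and> d < card (fibre (minimals_below x))"
  obtain x0 where x0: "?large x0" and least: "\<And>x. ?large x \<Longrightarrow> card (minimals_below x0) \<le> card (minimals_below x)"
    using True ex_has_least_nat[of ?large _ "\<lambda>x. card (minimals_below x)"] by blast
  have below: "minimals_below x0 \<subseteq> minimals_below x" if "?large x" for x
  proof (rule ccontr)
    assume "\<not> minimals_below x0 \<subseteq> minimals_below x"
    then have "minimals_below x \<subset> minimals_below x0" using large_fibres_chain x0 that by blast
    then have "card (minimals_below x) < card (minimals_below x0)"
      using finite_minimals minimals_below_subset by (meson psubset_card_mono finite_subset)
    then show False using least[OF that] by simp
  qed
  obtain m where "m \<in> minimals_below x0" using minimals_below_nonempty x0 by blast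
  then show thesis using that below minimals_below_subset by blast
next
  case False
  obtain x where "x \<in> T" using assms by blast
  then obtain m where "m \<in> minimals_below x" using minimals_below_nonempty by blast
  then show thesis using that False minimals_below_subset by blast
qed

lemma obtain_minimal_few_not_above:
  assumes "T \<noteq> {}"
  obtains m where "m \<in> minimals" "card {y \<in> T. \<not> m \<prec> y} \<le> (2 * d + 1) * 4 ^ d"
proof -
  obtain m where m: "m \<in> minimals"
    and large: "\<And>x. x \<in> T \<Longrightarrow> d < card (fibre (minimals_below x)) \<Longrightarrow> m \<in> minimals_below x"
    using obtain_minimal_in_large_fibres[OF assms] by blast
  let ?Ks = "Pow (minimals - {m})"
  have cover: "{y \<in> T. \<not> m \<prec> y} \<subseteq> insert m (\<Union>K\<in>?Ks. fibre K)"
  proof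
    fix y assume y: "y \<in> {y \<in> T. \<not> m \<prec> y}"
    show "y \<in> insert m (\<Union>K\<in>?Ks. fibre K)"
    proof (cases "y = m")
      case False
      then have "minimals_below y \<in> ?Ks"
        using y minimals_below_subset by (auto simp: minimals_below_def)
      then show ?thesis using y by (auto simp: fibre_def)
    qed simp
  qed
  have small: "card (fibre K) \<le> d" if "K \<in> ?Ks" for K
  proof (cases "fibre K = {}")
    case False
    then obtain y where "y \<in> T" "minimals_below y = K" by (auto simp: fibre_def)
    then show ?thesis using large[of y] that by force
  qed simp
  have finite_fibres: "finite (\<Union>K\<in>?Ks. fibre K)"
    using finite_T by (rule finite_subset[rotated]) (auto simp: fibre_def)
  have "card {y \<in> T. \<not> m \<prec> y} \<le> card (insert m (\<Union>K\<in>?Ks. fibre K))"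
    using cover finite_fibres by (intro card_mono) auto
  also have "\<dots> \<le> Suc (card (\<Union>K\<in>?Ks. fibre K))"
    by (simp add: card_insert_if finite_fibres)
  also have "card (\<Union>K\<in>?Ks. fibre K) \<le> (\<Sum>K\<in>?Ks. card (fibre K))"
    by (rule card_UN_le) (simp add: finite_minimals)
  also have "\<dots> \<le> card ?Ks * d"
    using sum_bounded_above[of ?Ks "\<lambda>K. card (fibre K)" d] small by simp
  also have "card ?Ks = 2 ^ (card minimals - 1)"
    using finite_minimals m by (simp add: card_Pow card_Diff_singleton)
  also have "(2::nat) ^ (card minimals - 1) \<le> 4 ^ d"
    using card_minimals power_increasing[of "card minimals - 1" "2 * d" "2::nat"]
    by (simp add: power_mult)
  finally have "card {y \<in> T. \<not> m \<prec> y} \<le> Suc (4 ^ d * d)" by simp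
  also have "\<dots> \<le> (2 * d + 1) * 4 ^ d"
  proof -
    have "(2 * d + 1) * 4 ^ d = 4 ^ d * d + 4 ^ d * d + (4::nat) ^ d" by (simp add: algebra_simps)
    moreover have "1 \<le> (4::nat) ^ d" by simp
    ultimately show ?thesis by linarith
  qed
  finally show thesis using that m by blast
qed

end


section \<open>The group as words modulo the relations\<close>

locale rac_words =
  fixes S :: "'a set" and E :: "'a \<Rightarrow> 'a \<Rightarrow> bool"
begin

abbreviation word_eq (infix "\<sim>" 50) where "u \<sim> v \<equiv> rac_eq S E u v"
abbreviation elem ("\<langle>_\<rangle>") where "\<langle>w\<rangle> \<equiv> elt S E w"

lemma rac_step_context: "rac_step S E u v \<Longrightarrow> rac_step S E (x @ u @ y) (x @ v @ y)"
proof (induction rule: rac_step.induct)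
  case (del s u v)
  then show ?case using rac_step.del[where u="x @ u" and v="v @ y"] by simp
next
  case (swap s t u v)
  then show ?case using rac_step.swap[where u="x @ u" and v="v @ y"] by simp
qed

lemma rac_step_rev: "rac_step S E u v \<Longrightarrow> rac_step S E (rev u) (rev v) \<or> rac_step S E (rev v) (rev u)"
proof (induction rule: rac_step.induct)
  case (del s u v)
  then show ?case using rac_step.del[where u="rev v" and v="rev u"] by simp
next
  case (swap s t u v)
  then show ?case using rac_step.swap[where u="rev v" and v="rev u"] by simp
qed

lemma word_eq_refl [simp]: "u \<sim> u"
  by (simp add: rac_eq_def)

lemma word_eq_sym: "u \<sim> v \<Longrightarrow> v \<sim> u"
  unfolding rac_eq_def by (rule rtranclp_symclp_sym)

lemma word_eq_trans: "u \<sim> v \<Longrightarrow> v \<sim> w \<Longrightarrow> u \<sim> w"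
  unfolding rac_eq_def by simp

lemma rac_step_word_eq: "rac_step S E u v \<Longrightarrow> u \<sim> v"
  unfolding rac_eq_def by (simp add: r_into_rtranclp symclpI)

lemma word_eq_induct [consumes 1, case_names refl step]:
  assumes "u \<sim> v"
    and "P u"
    and "\<And>v w. u \<sim> v \<Longrightarrow> P v \<Longrightarrow> rac_step S E v w \<or> rac_step S E w v \<Longrightarrow> P w"
  shows "P v"
  using assms(1) unfolding rac_eq_def
proof (induction rule: rtranclp_induct)
  case base then show ?case by (rule assms(2))
next
  case (step v w)
  then show ?case using assms(3) by (auto simp: rac_eq_def symclp_def)
qed

lemma word_eq_context: "u \<sim> v \<Longrightarrow> x @ u @ y \<sim> x @ v @ y"
proof (induction rule: word_eq_induct)
  case (step v w)
  then show ?case using rac_step_context rac_step_word_eq word_eq_sym word_eq_trans by metis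
qed simp

lemma word_eq_rev: "u \<sim> v \<Longrightarrow> rev u \<sim> rev v"
proof (induction rule: word_eq_induct)
  case (step v w)
  then show ?case using rac_step_rev rac_step_word_eq word_eq_sym word_eq_trans by metis
qed simp

lemma elem_eq_iff: "\<langle>u\<rangle> = \<langle>v\<rangle> \<longleftrightarrow> u \<sim> v"
  unfolding elt_def using word_eq_refl word_eq_sym word_eq_trans by blast

lemma elem_append_cong: "\<langle>u\<rangle> = \<langle>u'\<rangle> \<Longrightarrow> \<langle>v\<rangle> = \<langle>v'\<rangle> \<Longrightarrow> \<langle>u @ v\<rangle> = \<langle>u' @ v'\<rangle>"
  unfolding elem_eq_iff using word_eq_context[of u u' "[]" v] word_eq_context[of v v' u' "[]"]
  by (auto intro: word_eq_trans)

lemma elem_rev_cong: "\<langle>u\<rangle> = \<langle>v\<rangle> \<Longrightarrow> \<langle>rev u\<rangle> = \<langle>rev v\<rangle>"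
  unfolding elem_eq_iff by (rule word_eq_rev)

lemma elem_rac_step: "rac_step S E u v \<Longrightarrow> \<langle>u\<rangle> = \<langle>v\<rangle>"
  unfolding elem_eq_iff by (rule rac_step_word_eq)

lemma elem_double: "s \<in> S \<Longrightarrow> \<langle>x @ [s, s] @ y\<rangle> = \<langle>x @ y\<rangle>"
  by (rule elem_rac_step) (rule rac_step.del)

lemma elem_cancel: "set w \<subseteq> S \<Longrightarrow> \<langle>w @ rev w @ v\<rangle> = \<langle>v\<rangle>"
proof (induction w rule: rev_induct)
  case (snoc s w)
  then have "\<langle>w @ [s, s] @ rev w @ v\<rangle> = \<langle>w @ rev w @ v\<rangle>" by (intro elem_double) auto
  with snoc show ?case by simp
qed simp

lemma elem_cancel': "set w \<subseteq> S \<Longrightarrow> \<langle>rev w @ w @ v\<rangle> = \<langle>v\<rangle>"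
  using elem_cancel[of "rev w"] by simp

lemma elem_cancel_right: "set w \<subseteq> S \<Longrightarrow> \<langle>v @ rev w @ w\<rangle> = \<langle>v\<rangle>"
  using elem_append_cong[OF refl elem_cancel'[of w "[]"], of v] by simp

lemma elem_in_RAC: "set w \<subseteq> S \<Longrightarrow> \<langle>w\<rangle> \<in> RAC S E"
  unfolding RAC_def by blast

lemma RAC_elim:
  assumes "g \<in> RAC S E"
  obtains w where "set w \<subseteq> S" "g = \<langle>w\<rangle>"
  using assms unfolding RAC_def by blast

section \<open>Reflections crossed by a word\<close>

definition reflection_at :: "'a list \<Rightarrow> 'a \<Rightarrow> 'a list set" where
  "reflection_at p s = \<langle>p @ [s] @ rev p\<rangle>"

fun reflections_along :: "'a list \<Rightarrow> 'a list \<Rightarrow> 'a list set list" where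
  "reflections_along p [] = []"
| "reflections_along p (s # w) = reflection_at p s # reflections_along (p @ [s]) w"

lemma reflections_along_append:
  "reflections_along p (u @ v) = reflections_along p u @ reflections_along (p @ u) v"
  by (induction u arbitrary: p) auto

lemma length_reflections_along [simp]: "length (reflections_along p w) = length w"
  by (induction w arbitrary: p) auto

lemma nth_reflections_along:
  "i < length w \<Longrightarrow> reflections_along p w ! i = reflection_at (p @ take i w) (w ! i)"
proof (induction w arbitrary: p i)
  case (Cons s w)
  then show ?case by (cases i) auto
qed simp

lemma reflection_at_cong:
  assumes "\<langle>p\<rangle> = \<langle>p'\<rangle>"
  shows "reflection_at p s = reflection_at p' s"
proof -
  have "\<langle>(p @ [s]) @ rev p\<rangle> = \<langle>(p' @ [s]) @ rev p'\<rangle>"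
    using assms by (intro elem_append_cong elem_rev_cong) simp_all
  then show ?thesis by (simp add: reflection_at_def)
qed

lemma reflections_along_cong: "\<langle>p\<rangle> = \<langle>p'\<rangle> \<Longrightarrow> reflections_along p w = reflections_along p' w"
proof (induction w arbitrary: p p')
  case (Cons s w)
  show ?case
    using reflection_at_cong[OF Cons.prems] Cons.IH[OF elem_append_cong[OF Cons.prems refl]] by simp
qed simp

text \<open>The side of the wall of \<open>r\<close> on which a word ends is the parity of the number of
  times the path it spells crosses that wall.\<close>

definition parity :: "'a list set \<Rightarrow> 'a list \<Rightarrow> bool" where
  "parity r w = odd (count_list (reflections_along [] w) r)"

lemma parity_append:
  "parity r (p @ w) = (parity r p \<noteq> odd (count_list (reflections_along p w) r))"
  unfolding parity_def by (simp add: reflections_along_append)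

lemma parity_rac_step: "rac_step S E u v \<Longrightarrow> parity r u = parity r v"
proof (induction rule: rac_step.induct)
  case (del s u v)
  have "reflection_at (u @ [s]) s = reflection_at u s"
    unfolding reflection_at_def using elem_double[OF del, of u "[s] @ rev u"] by simp
  moreover have "reflections_along (u @ [s, s]) v = reflections_along u v"
    by (rule reflections_along_cong) (use elem_double[OF del, of u "[]"] in simp)
  ultimately show ?case by (simp add: parity_def reflections_along_append)
next
  case (swap s t u v)
  have swap_eq: "\<langle>u @ [s, t] @ y\<rangle> = \<langle>u @ [t, s] @ y\<rangle>" for y
    by (intro elem_rac_step rac_step.swap swap)
  have "reflection_at (u @ [s]) t = reflection_at u t"
    using swap_eq[of "[s] @ rev u"] elem_double[OF swap(1), of "u @ [t]" "rev u"]
    by (simp add: reflection_at_def)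
  moreover have "reflection_at (u @ [t]) s = reflection_at u s"
    using swap_eq[of "[t] @ rev u"] elem_double[OF swap(2), of "u @ [s]" "rev u"]
    by (simp add: reflection_at_def)
  moreover have "reflections_along (u @ [s, t]) v = reflections_along (u @ [t, s]) v"
    by (rule reflections_along_cong) (use swap_eq[of "[]"] in simp)
  ultimately show ?case by (simp add: parity_def reflections_along_append)
qed

lemma parity_word_eq: "u \<sim> v \<Longrightarrow> parity r u = parity r v"
  by (induction rule: word_eq_induct) (auto dest: parity_rac_step)

definition side :: "'a list set \<Rightarrow> 'a list set \<Rightarrow> bool" where
  "side r g = (\<exists>w. g = \<langle>w\<rangle> \<and> parity r w)"

lemma side_elem: "side r \<langle>w\<rangle> = parity r w"
  unfolding side_def using parity_word_eq elem_eq_iff by blast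

lemma side_append:
  "side r \<langle>p @ w\<rangle> = (side r \<langle>p\<rangle> \<noteq> odd (count_list (reflections_along p w) r))"
  by (simp add: side_elem parity_append)

definition word_path :: "'a list \<Rightarrow> 'a list \<Rightarrow> 'a list set list" where
  "word_path a c = map (\<lambda>i. \<langle>a @ take i c\<rangle>) [0..<Suc (length c)]"

lemma length_word_path [simp]: "length (word_path a c) = Suc (length c)"
  by (simp add: word_path_def)

lemma nth_word_path: "i \<le> length c \<Longrightarrow> word_path a c ! i = \<langle>a @ take i c\<rangle>"
  unfolding word_path_def by (subst nth_map) (simp_all del: upt_Suc)

lemma word_path_not_Nil [simp]: "word_path a c \<noteq> []"
  using length_word_path[of a c] by (metis list.size(3) nat.distinct(1))

lemma cay_path_word_path:
  assumes "set a \<subseteq> S" "set c \<subseteq> S"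
  shows "cay_path S E (word_path a c) \<langle>a\<rangle> \<langle>a @ c\<rangle>"
proof -
  have "cay_adj S E (word_path a c ! i) (word_path a c ! Suc i)" if "i < length c" for i
  proof -
    have "set (a @ take i c) \<subseteq> S" using assms set_take_subset[of i c] by auto
    moreover have "c ! i \<in> S" using assms that by (meson nth_mem subsetD)
    ultimately show ?thesis unfolding cay_adj_def using that
      by (auto simp: nth_word_path take_Suc_conv_app_nth
          intro!: exI[of _ "a @ take i c"] exI[of _ "c ! i"])
  qed
  moreover have "hd (word_path a c) = \<langle>a\<rangle>"
    using nth_word_path[of 0 c a] hd_conv_nth[OF word_path_not_Nil] by simp
  moreover have "last (word_path a c) = \<langle>a @ c\<rangle>"
    using nth_word_path[of "length c" c a] by (simp add: last_conv_nth)
  ultimately show ?thesis unfolding cay_path_def by simp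
qed

lemma path_edges_word_path:
  "path_edges (word_path a c) = {{\<langle>a @ take i c\<rangle>, \<langle>a @ take i c @ [c ! i]\<rangle>} | i. i < length c}"
proof -
  have "word_path a c ! i = \<langle>a @ take i c\<rangle> \<and> word_path a c ! Suc i = \<langle>a @ take i c @ [c ! i]\<rangle>"
    if "i < length c" for i
    using that by (simp add: nth_word_path take_Suc_conv_app_nth)
  then show ?thesis unfolding path_edges_def by fastforce
qed

lemma cay_path_from_elem_obtain_word:
  assumes "cay_path S E p \<langle>a\<rangle> y"
  obtains c where "set c \<subseteq> S" "p = word_path a c" "y = \<langle>a @ c\<rangle>"
proof -
  define n where "n = length p - 1"
  have ne: "p \<noteq> []" and hd: "hd p = \<langle>a\<rangle>" and last: "last p = y"
    and adj: "\<And>i. i < n \<Longrightarrow> cay_adj S E (p ! i) (p ! Suc i)"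
    using assms unfolding cay_path_def n_def by auto
  have "\<exists>w s. set w \<subseteq> S \<and> s \<in> S \<and> p ! i = \<langle>w\<rangle> \<and> p ! Suc i = \<langle>w @ [s]\<rangle>"
    if "i < n" for i
    using adj[OF that] unfolding cay_adj_def by blast
  then obtain w s where ws: "\<And>i. i < n \<Longrightarrow> set (w i) \<subseteq> S \<and> s i \<in> S \<and>
      p ! i = \<langle>w i\<rangle> \<and> p ! Suc i = \<langle>w i @ [s i]\<rangle>"
    by metis
  define c where "c = map s [0..<n]"
  have length_c: "length c = n" by (simp add: c_def)
  have p_nth: "p ! i = \<langle>a @ take i c\<rangle>" if "i \<le> n" for i
    using that
  proof (induction i)
    case 0
    then show ?case using hd ne by (simp add: hd_conv_nth)
  next
    case (Suc i)
    then have "\<langle>w i\<rangle> = \<langle>a @ take i c\<rangle>" using ws[of i] by simp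
    then have "p ! Suc i = \<langle>(a @ take i c) @ [s i]\<rangle>"
      using ws[of i] Suc.prems elem_append_cong[of "w i" "a @ take i c" "[s i]"] by simp
    then show ?case using Suc.prems length_c by (simp add: take_Suc_conv_app_nth c_def)
  qed
  have length_p: "length p = Suc n" using ne n_def by simp
  have "p = word_path a c"
    by (rule nth_equalityI) (use length_p length_c p_nth in \<open>auto simp: nth_word_path\<close>)
  moreover have "y = \<langle>a @ c\<rangle>"
    using last p_nth[of n] length_p length_c ne by (simp add: last_conv_nth)
  moreover have "set c \<subseteq> S" using ws by (auto simp: c_def)
  ultimately show thesis using that by blast
qed

lemma edge_in_wall_iff:
  assumes "set w \<subseteq> S" "s \<in> S"
  shows "{\<langle>w\<rangle>, \<langle>w @ [s]\<rangle>} \<in> wall S E r \<longleftrightarrow> reflection_at w s = r"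
proof
  assume "{\<langle>w\<rangle>, \<langle>w @ [s]\<rangle>} \<in> wall S E r"
  then obtain w' s' where "reflection_at w' s' = r"
    and "{\<langle>w\<rangle>, \<langle>w @ [s]\<rangle>} = {\<langle>w'\<rangle>, \<langle>w' @ [s']\<rangle>}"
    unfolding wall_def reflection_at_def by blast
  then consider "\<langle>w\<rangle> = \<langle>w'\<rangle>" "\<langle>w @ [s]\<rangle> = \<langle>w' @ [s']\<rangle>"
    | "\<langle>w\<rangle> = \<langle>w' @ [s']\<rangle>" "\<langle>w @ [s]\<rangle> = \<langle>w'\<rangle>"
    by (auto simp: doubleton_eq_iff)
  then show "reflection_at w s = r"
  proof cases
    case 1
    then have "\<langle>(w @ [s]) @ rev w\<rangle> = \<langle>(w' @ [s']) @ rev w'\<rangle>"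
      using elem_append_cong[OF 1(2) elem_rev_cong[OF 1(1)]] by simp
    then show ?thesis using \<open>reflection_at w' s' = r\<close> by (simp add: reflection_at_def)
  next
    case 2
    then have "\<langle>(w @ [s]) @ rev w\<rangle> = \<langle>w' @ rev (w' @ [s'])\<rangle>"
      using elem_append_cong[OF 2(2) elem_rev_cong[OF 2(1)]] by simp
    then show ?thesis using \<open>reflection_at w' s' = r\<close> by (simp add: reflection_at_def)
  qed
next
  assume "reflection_at w s = r"
  then show "{\<langle>w\<rangle>, \<langle>w @ [s]\<rangle>} \<in> wall S E r"
    unfolding wall_def reflection_at_def using assms by blast
qed

lemma wall_elim:
  assumes "e \<in> wall S E r"
  obtains w s where "set w \<subseteq> S" "s \<in> S" "e = {\<langle>w\<rangle>, \<langle>w @ [s]\<rangle>}" "reflection_at w s = r"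
  using assms unfolding wall_def reflection_at_def by blast

lemma walls_elim:
  assumes "W \<in> walls S E"
  obtains w s where "set w \<subseteq> S" "s \<in> S" "W = wall S E (reflection_at w s)"
  using assms unfolding walls_def reflection_def reflection_at_def by blast

lemma reflection_reflection_at: "set w \<subseteq> S \<Longrightarrow> s \<in> S \<Longrightarrow> reflection S E (reflection_at w s)"
  unfolding reflection_def reflection_at_def by blast

lemma wall_edge_subset_RAC: "e \<in> wall S E r \<Longrightarrow> e \<subseteq> RAC S E"
  by (auto elim!: wall_elim simp: elem_in_RAC)

lemma walls_edge_subset_RAC: "W \<in> walls S E \<Longrightarrow> e \<in> W \<Longrightarrow> e \<subseteq> RAC S E"
  unfolding walls_def using wall_edge_subset_RAC by blast

lemma word_path_edge_in_wall_iff: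
  assumes "set a \<subseteq> S" "set c \<subseteq> S" "i < length c"
  shows "{\<langle>a @ take i c\<rangle>, \<langle>a @ take i c @ [c ! i]\<rangle>} \<in> wall S E r
    \<longleftrightarrow> reflections_along a c ! i = r"
proof -
  have "set (a @ take i c) \<subseteq> S" using assms set_take_subset[of i c] by auto
  moreover have "c ! i \<in> S" using assms by auto
  ultimately show ?thesis
    using edge_in_wall_iff[of "a @ take i c" "c ! i" r] nth_reflections_along[OF assms(3)] by simp
qed

lemma word_path_meets_wall_iff:
  assumes "set a \<subseteq> S" "set c \<subseteq> S"
  shows "(\<exists>e \<in> path_edges (word_path a c). e \<in> wall S E r) \<longleftrightarrow> r \<in> set (reflections_along a c)"
  using word_path_edge_in_wall_iff[OF assms]
  by (auto simp: path_edges_word_path in_set_conv_nth)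

section \<open>Geodesic words and separation\<close>

text \<open>The deletion condition: a word whose path crosses the same wall twice can be shortened
  by deleting the two letters crossing it.\<close>

lemma elem_delete_repeated_reflection:
  assumes a: "set a \<subseteq> S" and c: "set c \<subseteq> S" and ij: "i < j" "j < length c"
    and same: "reflections_along a c ! i = reflections_along a c ! j"
  shows "\<langle>a @ take i c @ drop (Suc i) (take j c) @ drop (Suc j) c\<rangle> = \<langle>a @ c\<rangle>"
proof -
  define P x M y Q where "P = a @ take i c" and "x = c ! i" and "M = drop (Suc i) (take j c)"
    and "y = c ! j" and "Q = drop (Suc j) c"
  define L where "L = a @ take j c"
  have "take (Suc i) (take j c) = take i c @ [x]"
    using ij by (simp add: x_def min_def take_Suc_conv_app_nth)
  then have L: "L = P @ [x] @ M"
    using append_take_drop_id[of "Suc i" "take j c"] by (simp add: L_def P_def M_def)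
  have P: "set P \<subseteq> S" and L_S: "set L \<subseteq> S" and x: "x \<in> S"
    using a c ij set_take_subset[of i c] set_take_subset[of j c]
    by (auto simp: P_def L_def x_def)
  have "\<langle>P @ [x] @ rev P\<rangle> = \<langle>L @ [y] @ rev L\<rangle>"
    using same ij nth_reflections_along[of i c a] nth_reflections_along[of j c a]
    by (simp add: reflection_at_def P_def L_def x_def y_def)
  then have "\<langle>(L @ [y] @ rev L) @ L\<rangle> = \<langle>(P @ [x] @ rev P) @ L\<rangle>"
    by (rule elem_append_cong[OF sym refl])
  then have "\<langle>L @ [y]\<rangle> = \<langle>P @ [x] @ rev P @ P @ [x] @ M\<rangle>"
    using elem_cancel_right[OF L_S, of "L @ [y]"] by (simp add: L)
  also have "\<dots> = \<langle>P @ [x, x] @ M\<rangle>"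
    using elem_append_cong[OF refl elem_cancel'[OF P], of "P @ [x]"] by simp
  also have "\<dots> = \<langle>P @ M\<rangle>"
    by (rule elem_double[OF x])
  finally have "\<langle>(L @ [y]) @ Q\<rangle> = \<langle>(P @ M) @ Q\<rangle>"
    by (rule elem_append_cong[OF _ refl])
  moreover have "a @ c = (L @ [y]) @ Q"
    using id_take_nth_drop[OF ij(2)] by (simp add: L_def y_def Q_def)
  ultimately show ?thesis by (simp add: P_def M_def Q_def)
qed

lemma shortest_word_distinct_reflections:
  assumes a: "set a \<subseteq> S" and c: "set c \<subseteq> S"
    and shortest: "\<And>c'. set c' \<subseteq> S \<Longrightarrow> \<langle>a @ c'\<rangle> = \<langle>a @ c\<rangle> \<Longrightarrow> length c \<le> length c'"
  shows "distinct (reflections_along a c)"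
proof (rule ccontr)
  assume "\<not> distinct (reflections_along a c)"
  then obtain i j where ij: "i < j" "j < length c"
    and same: "reflections_along a c ! i = reflections_along a c ! j"
    unfolding distinct_conv_nth by (metis length_reflections_along linorder_neqE_nat)
  define c' where "c' = take i c @ drop (Suc i) (take j c) @ drop (Suc j) c"
  have "set c' \<subseteq> S"
    using c set_take_subset[of i c] set_drop_subset[of "Suc i" "take j c"]
      set_take_subset[of j c] set_drop_subset[of "Suc j" c]
    by (auto simp: c'_def)
  moreover have "\<langle>a @ c'\<rangle> = \<langle>a @ c\<rangle>"
    unfolding c'_def by (rule elem_delete_repeated_reflection[OF a c ij same])
  ultimately have "length c \<le> length c'" by (rule shortest)
  moreover have "length c' < length c" using ij by (simp add: c'_def)
  ultimately show False by simp
qed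

lemma obtain_geodesic:
  assumes "set a \<subseteq> S" "set b \<subseteq> S"
  obtains c where "set c \<subseteq> S" "\<langle>a @ c\<rangle> = \<langle>b\<rangle>" "distinct (reflections_along a c)"
proof -
  let ?P = "\<lambda>c. set c \<subseteq> S \<and> \<langle>a @ c\<rangle> = \<langle>b\<rangle>"
  have "?P (rev a @ b)" using assms elem_cancel[of a b] by auto
  then obtain c where c: "?P c" and min: "\<And>c'. ?P c' \<Longrightarrow> length c \<le> length c'"
    using ex_has_least_nat[of ?P "rev a @ b" length] by blast
  have "distinct (reflections_along a c)"
    by (rule shortest_word_distinct_reflections) (use assms c min in auto)
  then show thesis using c that by blast
qed

lemma separates_wall_iff_side:
  assumes a: "set a \<subseteq> S" and b: "set b \<subseteq> S"
  shows "separates S E (wall S E r) \<langle>a\<rangle> \<langle>b\<rangle> \<longleftrightarrow> side r \<langle>a\<rangle> \<noteq> side r \<langle>b\<rangle>"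
proof
  assume sep: "separates S E (wall S E r) \<langle>a\<rangle> \<langle>b\<rangle>"
  obtain c where c: "set c \<subseteq> S" "\<langle>a @ c\<rangle> = \<langle>b\<rangle>" "distinct (reflections_along a c)"
    using obtain_geodesic[OF a b] .
  have "cay_path S E (word_path a c) \<langle>a\<rangle> \<langle>b\<rangle>"
    using cay_path_word_path[OF a c(1)] c(2) by simp
  then have "r \<in> set (reflections_along a c)"
    using sep word_path_meets_wall_iff[OF a c(1)] unfolding separates_def by blast
  then have "count_list (reflections_along a c) r = 1"
    using count_list_distinct[OF c(3)] by simp
  then show "side r \<langle>a\<rangle> \<noteq> side r \<langle>b\<rangle>"
    using side_append[of r a c] c(2) by simp
next
  assume sides: "side r \<langle>a\<rangle> \<noteq> side r \<langle>b\<rangle>"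
  show "separates S E (wall S E r) \<langle>a\<rangle> \<langle>b\<rangle>"
    unfolding separates_def
  proof (intro allI impI)
    fix p assume "cay_path S E p \<langle>a\<rangle> \<langle>b\<rangle>"
    then obtain c where c: "set c \<subseteq> S" "p = word_path a c" "\<langle>b\<rangle> = \<langle>a @ c\<rangle>"
      by (rule cay_path_from_elem_obtain_word)
    have "odd (count_list (reflections_along a c) r)"
      using sides side_append[of r a c] c(3) by auto
    then have "r \<in> set (reflections_along a c)"
      using count_notin by fastforce
    then show "\<exists>e\<in>path_edges p. e \<in> wall S E r"
      using word_path_meets_wall_iff[OF a c(1)] c(2) by blast
  qed
qed

lemma separates_wall_iff_side_RAC:
  assumes "g \<in> RAC S E" "h \<in> RAC S E"
  shows "separates S E (wall S E r) g h \<longleftrightarrow> side r g \<noteq> side r h"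
  using assms by (auto elim!: RAC_elim simp: separates_wall_iff_side)

lemma Wsep_nonempty:
  assumes a: "set a \<subseteq> S" and b: "set b \<subseteq> S" and ab: "\<langle>a\<rangle> \<noteq> \<langle>b\<rangle>"
  shows "Wsep S E \<langle>a\<rangle> \<langle>b\<rangle> \<noteq> {}"
proof -
  obtain c where c: "set c \<subseteq> S" "\<langle>a @ c\<rangle> = \<langle>b\<rangle>" "distinct (reflections_along a c)"
    using obtain_geodesic[OF a b] .
  obtain s c' where c': "c = s # c'"
    using ab c(2) by (cases c) auto
  define r where "r = reflection_at a s"
  have "r \<in> set (reflections_along a c)" by (simp add: r_def c')
  then have "count_list (reflections_along a c) r = 1"
    using count_list_distinct[OF c(3)] by simp
  then have "separates S E (wall S E r) \<langle>a\<rangle> \<langle>b\<rangle>"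
    using side_append[of r a c] c(2) separates_wall_iff_side[OF a b] by simp
  moreover have "reflection S E r"
    unfolding r_def by (rule reflection_reflection_at) (use a c(1) c' in auto)
  ultimately show ?thesis unfolding Wsep_def walls_def by blast
qed

lemma finite_Wsep:
  assumes a: "set a \<subseteq> S" and b: "set b \<subseteq> S"
  shows "finite (Wsep S E \<langle>a\<rangle> \<langle>b\<rangle>)"
proof -
  define c where "c = rev a @ b"
  have c: "set c \<subseteq> S" using a b by (auto simp: c_def)
  have "cay_path S E (word_path a c) \<langle>a\<rangle> \<langle>b\<rangle>"
    using cay_path_word_path[OF a c] elem_cancel[OF a, of b] by (simp add: c_def)
  then have "Wsep S E \<langle>a\<rangle> \<langle>b\<rangle> \<subseteq> wall S E ` set (reflections_along a c)"
    using word_path_meets_wall_iff[OF a c] unfolding Wsep_def separates_def walls_def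
    by blast
  then show ?thesis by (rule finite_surj[rotated]) simp
qed


section \<open>The order on separating walls\<close>

lemma separates_obtain_edge:
  assumes "separates S E W x y" "cay_path S E p x y"
  obtains j where "j < length p - 1" "{p ! j, p ! Suc j} \<in> W"
proof -
  obtain e where "e \<in> path_edges p" "e \<in> W" using assms unfolding separates_def by blast
  then show thesis using that unfolding path_edges_iff by blast
qed

lemma separates_mono: "separates S E W x y \<Longrightarrow> W \<subseteq> W' \<Longrightarrow> separates S E W' x y"
  unfolding separates_def by blast

lemma cay_path_take:
  assumes "cay_path S E p x y" "i < length p"
  shows "cay_path S E (take (Suc i) p) x (p ! i)"
  using assms unfolding cay_path_def by (auto simp: hd_conv_nth last_conv_nth)

lemma separates_path_prefix:
  assumes p: "cay_path S E p x y" and i: "i < length p" and sep: "separates S E W x (p ! i)"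
  obtains j where "j < i" "{p ! j, p ! Suc j} \<in> W"
proof -
  obtain j where "j < i" "{take (Suc i) p ! j, take (Suc i) p ! Suc j} \<in> W"
    using separates_obtain_edge[OF sep cay_path_take[OF p i]] i by auto
  then show thesis using that by simp
qed

lemma wall_less_separates: "wall_less S E x W W' \<Longrightarrow> {u, v} \<in> W' \<Longrightarrow> separates S E W x u"
  unfolding wall_less_def by blast

lemma separates_if_wall_less_wall_less:
  assumes "wall_less S E x W1 W2" "wall_less S E x W2 W3" "e \<in> W3" "v \<in> e"
  shows "separates S E W1 x v"
  unfolding separates_def
proof (intro allI impI)
  fix p assume p: "cay_path S E p x v"
  have "separates S E W2 x v" using assms(2-4) unfolding wall_less_def by blast
  then obtain j where j: "j < length p - 1" "{p ! j, p ! Suc j} \<in> W2"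
    using p by (rule separates_obtain_edge)
  have "separates S E W1 x (p ! j)" using j(2) by (rule wall_less_separates[OF assms(1)])
  moreover have "j < length p" using j(1) by simp
  ultimately obtain k where "k < j" "{p ! k, p ! Suc k} \<in> W1"
    using separates_path_prefix[OF p] by blast
  then show "\<exists>e\<in>path_edges p. e \<in> W1"
    using j(1) edge_in_path_edges[of k p] by auto
qed

text \<open>On a path from \<open>x\<close> into an edge of \<open>W\<^sub>1\<close>, look at the first edge lying in \<open>W\<^sub>1\<close>
  or \<open>W\<^sub>2\<close>: if the walls were below each other, one of them would have to be crossed even
  earlier.\<close>

lemma wall_less_asym:
  assumes W1: "W1 \<in> walls S E" and x: "x \<in> RAC S E"
    and less12: "wall_less S E x W1 W2" and less21: "wall_less S E x W2 W1"
  shows False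
proof -
  obtain w s where ws: "set w \<subseteq> S" "s \<in> S" "W1 = wall S E (reflection_at w s)"
    using W1 by (rule walls_elim)
  obtain a where a: "set a \<subseteq> S" "x = \<langle>a\<rangle>" using x by (rule RAC_elim)
  define p where "p = word_path a (rev a @ w)"
  have aw: "set (rev a @ w) \<subseteq> S" using a(1) ws(1) by auto
  have p: "cay_path S E p x \<langle>w\<rangle>"
    using cay_path_word_path[OF a(1) aw] elem_cancel[OF a(1), of w] a(2) by (simp add: p_def)
  define crosses where "crosses k \<longleftrightarrow> k < length p - 1 \<and> {p ! k, p ! Suc k} \<in> W1 \<union> W2" for k
  have "{\<langle>w\<rangle>, \<langle>w @ [s]\<rangle>} \<in> W1" using edge_in_wall_iff[OF ws(1,2)] ws(3) by simp
  then have "separates S E W2 x \<langle>w\<rangle>" by (rule wall_less_separates[OF less21])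
  then have "separates S E (W1 \<union> W2) x \<langle>w\<rangle>" by (rule separates_mono) simp
  then obtain j where "crosses j"
    using p unfolding crosses_def by (rule separates_obtain_edge) blast
  then obtain i where i: "crosses i" and first: "\<And>k. k < i \<Longrightarrow> \<not> crosses k"
    using exists_least_iff[of crosses] by blast
  have "{p ! i, p ! Suc i} \<in> W1 \<union> W2" using i by (simp add: crosses_def)
  then have "separates S E (W1 \<union> W2) x (p ! i)"
  proof (elim UnE)
    assume "{p ! i, p ! Suc i} \<in> W1"
    then have "separates S E W2 x (p ! i)" by (rule wall_less_separates[OF less21])
    then show ?thesis by (rule separates_mono) simp
  next
    assume "{p ! i, p ! Suc i} \<in> W2"
    then have "separates S E W1 x (p ! i)" by (rule wall_less_separates[OF less12])
    then show ?thesis by (rule separates_mono) simp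
  qed
  moreover have "i < length p" using i by (auto simp: crosses_def)
  ultimately obtain k where "k < i" "{p ! k, p ! Suc k} \<in> W1 \<union> W2"
    using separates_path_prefix[OF p] by blast
  then show False using first[of k] i by (simp add: crosses_def)
qed

lemma wall_less_trans:
  assumes "W1 \<in> walls S E" "x \<in> RAC S E" "wall_less S E x W1 W2" "wall_less S E x W2 W3"
  shows "wall_less S E x W1 W3"
proof -
  have "W1 \<noteq> W3" using wall_less_asym[OF assms(1,2,3)] assms(4) by blast
  then show ?thesis
    using separates_if_wall_less_wall_less[OF assms(3,4)] unfolding wall_less_def by blast
qed

lemma path_vertex_in_RAC:
  assumes "cay_path S E p \<langle>a\<rangle> y" "set a \<subseteq> S" "i < length p"
  shows "p ! i \<in> RAC S E"
proof -
  obtain c where c: "set c \<subseteq> S" "p = word_path a c"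
    using assms(1) by (rule cay_path_from_elem_obtain_word)
  moreover have "set (a @ take i c) \<subseteq> S"
    using assms(2) c(1) set_take_subset[of i c] by auto
  ultimately show ?thesis
    using assms(3) nth_word_path[of i c a] elem_in_RAC by simp
qed

text \<open>As \<open>W'\<close> crosses \<open>W\<close>, some two points on the side of \<open>W\<close> containing \<open>x\<close> are separated
  by \<open>W'\<close> but not by \<open>W\<close>. A path between them avoiding \<open>W\<close> crosses \<open>W'\<close> at an edge whose
  vertices \<open>W\<close> does not separate from \<open>x\<close>.\<close>

lemma walls_cross_not_wall_less:
  assumes cross: "walls_cross S E (wall S E r) W'" and x: "x \<in> RAC S E"
  shows "\<not> wall_less S E x (wall S E r) W'"
proof
  assume less: "wall_less S E x (wall S E r) W'"
  obtain x00 x01 x10 x11 where R: "x00 \<in> RAC S E" "x01 \<in> RAC S E" "x10 \<in> RAC S E" "x11 \<in> RAC S E"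
    and same: "\<not> separates S E (wall S E r) x00 x01" "\<not> separates S E (wall S E r) x10 x11"
    and opposite: "separates S E (wall S E r) x00 x10"
    and across: "separates S E W' x00 x01" "separates S E W' x10 x11"
    using cross unfolding walls_cross_def by blast
  have "side r x00 \<noteq> side r x10" using opposite separates_wall_iff_side_RAC R by blast
  then obtain y0 y1 where y: "y0 \<in> RAC S E" "side r y0 = side r x"
    "\<not> separates S E (wall S E r) y0 y1" "separates S E W' y0 y1"
    using R same across by (cases "side r x00 = side r x") auto
  obtain p where p: "cay_path S E p y0 y1" "\<forall>e\<in>path_edges p. e \<notin> wall S E r"
    using y(3) unfolding separates_def by blast
  obtain j where j: "j < length p - 1" "{p ! j, p ! Suc j} \<in> W'"
    using y(4) p(1) by (rule separates_obtain_edge)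
  obtain a0 where a0: "set a0 \<subseteq> S" "y0 = \<langle>a0\<rangle>" using y(1) by (rule RAC_elim)
  have v: "p ! j \<in> RAC S E" using path_vertex_in_RAC[of p a0 y1 j] p(1) a0 j(1) by simp
  have "separates S E (wall S E r) x (p ! j)" using j(2) by (rule wall_less_separates[OF less])
  then have "side r x \<noteq> side r (p ! j)" using separates_wall_iff_side_RAC[OF x v] by blast
  moreover have "\<not> separates S E (wall S E r) y0 (p ! j)"
  proof
    assume "separates S E (wall S E r) y0 (p ! j)"
    moreover have "j < length p" using j(1) by simp
    ultimately obtain k where "k < j" "{p ! k, p ! Suc k} \<in> wall S E r"
      using separates_path_prefix[OF p(1)] by blast
    then show False using p(2) j(1) edge_in_path_edges[of k p] by auto
  qed
  then have "side r y0 = side r (p ! j)" using separates_wall_iff_side_RAC[OF y(1) v] by blast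
  ultimately show False using y(2) by simp
qed


lemma walls_intersect_not_wall_less:
  assumes "W \<in> walls S E" "x \<in> RAC S E" "walls_intersect S E W W'"
  shows "\<not> wall_less S E x W W'"
proof -
  obtain w s where "W = wall S E (reflection_at w s)"
    using assms(1) by (rule walls_elim)
  then show ?thesis
    using assms(3) walls_cross_not_wall_less[OF _ assms(2)]
    unfolding walls_intersect_def wall_less_def by blast
qed

section \<open>Translating walls\<close>

definition translate :: "'a list \<Rightarrow> 'a list set \<Rightarrow> 'a list set" where
  "translate t g = \<langle>t @ (SOME w. w \<in> g)\<rangle>"

definition translate_wall :: "'a list \<Rightarrow> 'a list set set set \<Rightarrow> 'a list set set set" where
  "translate_wall t W = (\<lambda>e. translate t ` e) ` W"

lemma translate_elem [simp]: "translate t \<langle>w\<rangle> = \<langle>t @ w\<rangle>"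
proof -
  have "(SOME v. v \<in> \<langle>w\<rangle>) \<in> \<langle>w\<rangle>" by (rule someI[of _ w]) (simp add: elt_def)
  then have "w \<sim> (SOME v. v \<in> \<langle>w\<rangle>)" by (simp add: elt_def)
  then have "\<langle>SOME v. v \<in> \<langle>w\<rangle>\<rangle> = \<langle>w\<rangle>" unfolding elem_eq_iff by (rule word_eq_sym)
  then show ?thesis unfolding translate_def by (rule elem_append_cong[OF refl])
qed

lemma translate_in_RAC: "set t \<subseteq> S \<Longrightarrow> g \<in> RAC S E \<Longrightarrow> translate t g \<in> RAC S E"
  by (auto elim!: RAC_elim simp: elem_in_RAC)

lemma translate_rev_translate: "set t \<subseteq> S \<Longrightarrow> g \<in> RAC S E \<Longrightarrow> translate (rev t) (translate t g) = g"
  by (auto elim!: RAC_elim simp: elem_cancel')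

lemma inj_on_translate: "set t \<subseteq> S \<Longrightarrow> inj_on (translate t) (RAC S E)"
  by (rule inj_on_inverseI[of _ "translate (rev t)"]) (rule translate_rev_translate)

lemma cay_adj_in_RAC: "cay_adj S E g h \<Longrightarrow> g \<in> RAC S E \<and> h \<in> RAC S E"
  unfolding cay_adj_def by (auto simp: elem_in_RAC)

lemma cay_adj_translate:
  assumes "set t \<subseteq> S" "cay_adj S E g h"
  shows "cay_adj S E (translate t g) (translate t h)"
proof -
  obtain w s where "set w \<subseteq> S" "s \<in> S" "g = \<langle>w\<rangle>" "h = \<langle>w @ [s]\<rangle>"
    using assms(2) unfolding cay_adj_def by blast
  then show ?thesis
    using assms(1) unfolding cay_adj_def by (intro exI[of _ "t @ w"] exI[of _ s]) simp
qed

lemma cay_path_translate: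
  "set t \<subseteq> S \<Longrightarrow> cay_path S E p x y \<Longrightarrow> cay_path S E (map (translate t) p) (translate t x) (translate t y)"
  unfolding cay_path_def by (auto simp: hd_map last_map cay_adj_translate)

lemma separates_of_translate_wall:
  assumes t: "set t \<subseteq> S" and W: "\<And>e. e \<in> W \<Longrightarrow> e \<subseteq> RAC S E"
    and sep: "separates S E (translate_wall t W) (translate t x) (translate t y)"
  shows "separates S E W x y"
  unfolding separates_def
proof (intro allI impI)
  fix p assume p: "cay_path S E p x y"
  obtain j where j: "j < length p - 1"
    and "{map (translate t) p ! j, map (translate t) p ! Suc j} \<in> translate_wall t W"
    using sep cay_path_translate[OF t p] by (rule separates_obtain_edge) simp
  then have "translate t ` {p ! j, p ! Suc j} \<in> (\<lambda>e. translate t ` e) ` W"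
    by (simp add: translate_wall_def)
  then obtain e where e: "translate t ` {p ! j, p ! Suc j} = translate t ` e" "e \<in> W"
    by (rule imageE)
  have "cay_adj S E (p ! j) (p ! Suc j)" using p j unfolding cay_path_def by blast
  then have edge: "{p ! j, p ! Suc j} \<subseteq> RAC S E" by (simp add: cay_adj_in_RAC)
  have "{p ! j, p ! Suc j} = e"
    using inj_on_image_eq_iff[OF inj_on_translate[OF t] edge W[OF e(2)]] e(1) by (rule iffD1)
  then show "\<exists>e\<in>path_edges p. e \<in> W" using e(2) edge_in_path_edges[OF j] by auto
qed

lemma translate_wall_translate_wall:
  assumes "set t \<subseteq> S" "\<And>e. e \<in> W \<Longrightarrow> e \<subseteq> RAC S E"
  shows "translate_wall (rev t) (translate_wall t W) = W"
proof -
  have "translate (rev t) ` translate t ` e = e" if "e \<in> W" for e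
    using translate_rev_translate[OF assms(1)] assms(2)[OF that] by (force simp: image_image)
  then show ?thesis unfolding translate_wall_def by (simp add: image_image)
qed

lemma translate_wall_edges_RAC:
  "set t \<subseteq> S \<Longrightarrow> (\<And>e. e \<in> W \<Longrightarrow> e \<subseteq> RAC S E) \<Longrightarrow> e \<in> translate_wall t W \<Longrightarrow> e \<subseteq> RAC S E"
  unfolding translate_wall_def using translate_in_RAC by blast

lemma separates_translate_wall:
  assumes t: "set t \<subseteq> S" and W: "\<And>e. e \<in> W \<Longrightarrow> e \<subseteq> RAC S E"
    and "x \<in> RAC S E" "y \<in> RAC S E" "separates S E W x y"
  shows "separates S E (translate_wall t W) (translate t x) (translate t y)"
proof (rule separates_of_translate_wall[of "rev t"])
  show "set (rev t) \<subseteq> S" using t by simp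
  show "\<And>e. e \<in> translate_wall t W \<Longrightarrow> e \<subseteq> RAC S E"
    by (rule translate_wall_edges_RAC[OF t W])
  show "separates S E (translate_wall (rev t) (translate_wall t W))
      (translate (rev t) (translate t x)) (translate (rev t) (translate t y))"
    using assms by (simp add: translate_wall_translate_wall translate_rev_translate)
qed

lemma reflection_at_append_cong:
  "reflection_at u s = reflection_at w s' \<Longrightarrow> reflection_at (t @ u) s = reflection_at (t @ w) s'"
  using elem_append_cong[OF refl elem_append_cong[OF _ refl], of "u @ [s] @ rev u" "w @ [s'] @ rev w" t "rev t"]
  by (simp add: reflection_at_def)

lemma translate_wall_subset:
  assumes "set t \<subseteq> S"
  shows "translate_wall t (wall S E (reflection_at w s)) \<subseteq> wall S E (reflection_at (t @ w) s)"
proof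
  fix e' assume "e' \<in> translate_wall t (wall S E (reflection_at w s))"
  then obtain e where e: "e \<in> wall S E (reflection_at w s)" "e' = translate t ` e"
    unfolding translate_wall_def by blast
  obtain u s' where u: "set u \<subseteq> S" "s' \<in> S" "e = {\<langle>u\<rangle>, \<langle>u @ [s']\<rangle>}"
    and same: "reflection_at u s' = reflection_at w s"
    using e(1) by (rule wall_elim)
  have "reflection_at (t @ u) s' = reflection_at (t @ w) s"
    using same by (rule reflection_at_append_cong)
  then show "e' \<in> wall S E (reflection_at (t @ w) s)"
    using edge_in_wall_iff[of "t @ u" s'] assms u e(2) by simp
qed

lemma translate_wall_wall:
  assumes t: "set t \<subseteq> S"
  shows "translate_wall t (wall S E (reflection_at w s)) = wall S E (reflection_at (t @ w) s)"
proof
  have "reflection_at (rev t @ t @ w) s = reflection_at w s"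
    by (rule reflection_at_cong) (rule elem_cancel'[OF t])
  then have "translate_wall (rev t) (wall S E (reflection_at (t @ w) s)) \<subseteq> wall S E (reflection_at w s)"
    using translate_wall_subset[of "rev t" "t @ w" s] t by simp
  then have "translate_wall t (translate_wall (rev t) (wall S E (reflection_at (t @ w) s)))
      \<subseteq> translate_wall t (wall S E (reflection_at w s))"
    unfolding translate_wall_def by blast
  then show "wall S E (reflection_at (t @ w) s) \<subseteq> translate_wall t (wall S E (reflection_at w s))"
    using translate_wall_translate_wall[of "rev t" "wall S E (reflection_at (t @ w) s)"] t
      wall_edge_subset_RAC by simp
qed (rule translate_wall_subset[OF t])

lemma translate_wall_in_walls:
  assumes t: "set t \<subseteq> S" and "W \<in> walls S E"
  shows "translate_wall t W \<in> walls S E"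
proof -
  obtain w s where ws: "set w \<subseteq> S" "s \<in> S" "W = wall S E (reflection_at w s)"
    using assms(2) by (rule walls_elim)
  then have "reflection S E (reflection_at (t @ w) s)"
    using t by (intro reflection_reflection_at) auto
  then show ?thesis unfolding walls_def ws(3) translate_wall_wall[OF t] by blast
qed

lemma inj_on_translate_wall: "set t \<subseteq> S \<Longrightarrow> inj_on (translate_wall t) (walls S E)"
  by (rule inj_on_inverseI[of _ "translate_wall (rev t)"])
    (simp add: translate_wall_translate_wall walls_edge_subset_RAC)

lemma translate_wall_Wsep:
  assumes t: "set t \<subseteq> S" and a: "set a \<subseteq> S" and b: "set b \<subseteq> S"
    and W: "W \<in> Wsep S E \<langle>a\<rangle> \<langle>b\<rangle>"
  shows "translate_wall t W \<in> Wsep S E \<langle>t @ a\<rangle> \<langle>t @ b\<rangle>"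
  using W separates_translate_wall[OF t walls_edge_subset_RAC elem_in_RAC[OF a] elem_in_RAC[OF b]]
    translate_wall_in_walls[OF t]
  by (auto simp: Wsep_def)

lemma wall_less_of_translate_wall:
  assumes t: "set t \<subseteq> S" and W: "W \<in> walls S E" and W': "W' \<in> walls S E"
    and x: "x \<in> RAC S E"
    and less: "wall_less S E (translate t x) (translate_wall t W) (translate_wall t W')"
  shows "wall_less S E x W W'"
  unfolding wall_less_def
proof (intro conjI ballI)
  show "W \<noteq> W'" using less unfolding wall_less_def by blast
  fix e v assume "e \<in> W'" "v \<in> e"
  then have "separates S E (translate_wall t W) (translate t x) (translate t v)"
    using less unfolding wall_less_def translate_wall_def by blast
  from t walls_edge_subset_RAC[OF W] this show "separates S E W x v"
    by (rule separates_of_translate_wall)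
qed


lemma incomparable_translate_wall:
  assumes "set t \<subseteq> S" "W \<in> walls S E" "W' \<in> walls S E" "x \<in> RAC S E"
    and "incomparable S E x W W'"
  shows "incomparable S E (translate t x) (translate_wall t W) (translate_wall t W')"
  using assms wall_less_of_translate_wall[OF assms(1-4)] wall_less_of_translate_wall[OF assms(1,3,2,4)]
  unfolding incomparable_def by blast

lemma Wsep_incomparable_card_le:
  assumes a: "set a \<subseteq> S" and b: "set b \<subseteq> S"
    and bpp: "bounded_product_projections S E D \<langle>rev a @ b\<rangle>"
    and A: "A \<subseteq> Wsep S E \<langle>a\<rangle> \<langle>b\<rangle>" and B: "B \<subseteq> Wsep S E \<langle>a\<rangle> \<langle>b\<rangle>" and disjoint: "A \<inter> B = {}"
    and incomparable: "\<forall>W\<in>A. \<forall>W'\<in>B. incomparable S E \<langle>a\<rangle> W W'"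
  shows "real (min (card A) (card B)) \<le> D"
proof -
  let ?T = "Wsep S E \<langle>a\<rangle> \<langle>b\<rangle>" and ?\<psi> = "translate_wall (rev a)"
  have T_walls: "?T \<subseteq> walls S E" by (auto simp: Wsep_def)
  have rev_a: "set (rev a) \<subseteq> S" using a by simp
  have inj: "inj_on ?\<psi> ?T"
    using inj_on_translate_wall[OF rev_a] T_walls by (rule inj_on_subset)
  have into: "?\<psi> ` ?T \<subseteq> Wsep S E \<langle>[]\<rangle> \<langle>rev a @ b\<rangle>"
    using translate_wall_Wsep[OF rev_a a b] elem_cancel'[OF a, of "[]"] by auto
  have incomparable_images: "incomparable S E \<langle>[]\<rangle> (?\<psi> W) (?\<psi> W')" if "W \<in> A" "W' \<in> B" for W W'
  proof -
    have "incomparable S E (translate (rev a) \<langle>a\<rangle>) (?\<psi> W) (?\<psi> W')"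
      using that A B T_walls incomparable
      by (intro incomparable_translate_wall[OF rev_a _ _ elem_in_RAC[OF a]]) auto
    then show ?thesis using elem_cancel'[OF a, of "[]"] by simp
  qed
  have "real (min (card (?\<psi> ` A)) (card (?\<psi> ` B))) \<le> D"
    using bpp unfolding bounded_product_projections_def
  proof (elim allE impE)
    show "?\<psi> ` A \<subseteq> Wsep S E \<langle>[]\<rangle> \<langle>rev a @ b\<rangle> \<and> ?\<psi> ` B \<subseteq> Wsep S E \<langle>[]\<rangle> \<langle>rev a @ b\<rangle> \<and>
        ?\<psi> ` A \<inter> ?\<psi> ` B = {} \<and> (\<forall>V\<in>?\<psi> ` A. \<forall>V'\<in>?\<psi> ` B. incomparable S E \<langle>[]\<rangle> V V')"
      using into A B inj_on_image_Int[OF inj A B] disjoint incomparable_images by auto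
  qed
  moreover have "card (?\<psi> ` A) = card A" "card (?\<psi> ` B) = card B"
    using inj A B by (auto intro: card_image inj_on_subset)
  ultimately show ?thesis by simp
qed

lemma bounded_products_Wsep:
  assumes a: "set a \<subseteq> S" and b: "set b \<subseteq> S"
    and bpp: "bounded_product_projections S E D \<langle>rev a @ b\<rangle>"
  shows "bounded_products (Wsep S E \<langle>a\<rangle> \<langle>b\<rangle>) (wall_less S E \<langle>a\<rangle>) (nat \<lfloor>D\<rfloor>)"
proof
  show "finite (Wsep S E \<langle>a\<rangle> \<langle>b\<rangle>)" using a b by (rule finite_Wsep)
  show "\<not> wall_less S E \<langle>a\<rangle> W W" for W by (simp add: wall_less_def)
  show "wall_less S E \<langle>a\<rangle> W1 W3"
    if "W1 \<in> Wsep S E \<langle>a\<rangle> \<langle>b\<rangle>" "wall_less S E \<langle>a\<rangle> W1 W2" "wall_less S E \<langle>a\<rangle> W2 W3"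
    for W1 W2 W3
    using wall_less_trans that elem_in_RAC[OF a] by (auto simp: Wsep_def)
  show "min (card A) (card B) \<le> nat \<lfloor>D\<rfloor>"
    if "A \<subseteq> Wsep S E \<langle>a\<rangle> \<langle>b\<rangle>" "B \<subseteq> Wsep S E \<langle>a\<rangle> \<langle>b\<rangle>" "A \<inter> B = {}"
      "\<forall>W\<in>A. \<forall>W'\<in>B. \<not> wall_less S E \<langle>a\<rangle> W W' \<and> \<not> wall_less S E \<langle>a\<rangle> W' W" for A B
    using Wsep_incomparable_card_le[OF a b bpp that(1-3)] that(4)
    unfolding incomparable_def by (simp add: le_nat_floor)
qed

lemma elem_rev_append_eq_Nil_iff:
  assumes "set a \<subseteq> S"
  shows "\<langle>rev a @ b\<rangle> = \<langle>[]\<rangle> \<longleftrightarrow> \<langle>a\<rangle> = \<langle>b\<rangle>"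
proof
  assume "\<langle>rev a @ b\<rangle> = \<langle>[]\<rangle>"
  then have "\<langle>a @ rev a @ b\<rangle> = \<langle>a @ []\<rangle>" by (rule elem_append_cong[OF refl])
  then show "\<langle>a\<rangle> = \<langle>b\<rangle>" using elem_cancel[OF assms, of b] by simp
next
  assume "\<langle>a\<rangle> = \<langle>b\<rangle>"
  then have "\<langle>rev a @ a\<rangle> = \<langle>rev a @ b\<rangle>" by (rule elem_append_cong[OF refl])
  then show "\<langle>rev a @ b\<rangle> = \<langle>[]\<rangle>" using elem_cancel'[OF assms, of "[]"] by simp
qed

lemma obtain_minimal_wall_few_intersecting:
  assumes a: "set a \<subseteq> S" and b: "set b \<subseteq> S" and ab: "\<langle>a\<rangle> \<noteq> \<langle>b\<rangle>"
    and bpp: "bounded_product_projections S E D \<langle>rev a @ b\<rangle>"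
  obtains m where "m \<in> Wsep S E \<langle>a\<rangle> \<langle>b\<rangle>" "\<forall>W \<in> Wsep S E \<langle>a\<rangle> \<langle>b\<rangle>. \<not> wall_less S E \<langle>a\<rangle> W m"
    "card {W \<in> Wsep S E \<langle>a\<rangle> \<langle>b\<rangle>. walls_intersect S E m W} \<le> (2 * nat \<lfloor>D\<rfloor> + 1) * 4 ^ nat \<lfloor>D\<rfloor>"
proof -
  let ?T = "Wsep S E \<langle>a\<rangle> \<langle>b\<rangle>"
  interpret bounded_products ?T "wall_less S E \<langle>a\<rangle>" "nat \<lfloor>D\<rfloor>"
    using a b bpp by (rule bounded_products_Wsep)
  obtain m where m: "m \<in> minimals"
    and few: "card {W \<in> ?T. \<not> wall_less S E \<langle>a\<rangle> m W} \<le> (2 * nat \<lfloor>D\<rfloor> + 1) * 4 ^ nat \<lfloor>D\<rfloor>"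
    using obtain_minimal_few_not_above Wsep_nonempty[OF a b ab] by blast
  then have m_T: "m \<in> ?T" and "\<forall>W \<in> ?T. \<not> wall_less S E \<langle>a\<rangle> W m"
    by (auto simp: minimals_def)
  moreover have "{W \<in> ?T. walls_intersect S E m W} \<subseteq> {W \<in> ?T. \<not> wall_less S E \<langle>a\<rangle> m W}"
    using walls_intersect_not_wall_less[of m "\<langle>a\<rangle>"] m_T elem_in_RAC[OF a]
    by (auto simp: Wsep_def)
  then have "card {W \<in> ?T. walls_intersect S E m W} \<le> (2 * nat \<lfloor>D\<rfloor> + 1) * 4 ^ nat \<lfloor>D\<rfloor>"
    using few finite_T by (auto dest!: card_mono[rotated] intro: le_trans)
  ultimately show thesis using that by blast
qed

end

lemma real_bound_floor_le_powr:
  assumes "0 \<le> D"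
  shows "real ((2 * nat \<lfloor>D\<rfloor> + 1) * 4 ^ nat \<lfloor>D\<rfloor>) \<le> (2 * D + 1) * 4 powr D"
proof -
  have d: "real (nat \<lfloor>D\<rfloor>) \<le> D" using assms by linarith
  have "real ((2 * nat \<lfloor>D\<rfloor> + 1) * 4 ^ nat \<lfloor>D\<rfloor>) = (2 * real (nat \<lfloor>D\<rfloor>) + 1) * 4 powr real (nat \<lfloor>D\<rfloor>)"
    by (simp add: powr_realpow algebra_simps)
  also have "\<dots> \<le> (2 * D + 1) * 4 powr D"
    using d assms by (intro mult_mono powr_mono) auto
  finally show ?thesis .
qed

theorem lemma3p6:
  fixes S :: "'a set" and E :: "'a \<Rightarrow> 'a \<Rightarrow> bool" and D :: real and a b :: "'a list"
  assumes "right_angled_coxeter S E"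
    and "D > 0"
    and "set a \<subseteq> S" and "set b \<subseteq> S"
    and "elt S E (rev a @ b) \<noteq> elt S E []"
    and "bounded_product_projections S E D (elt S E (rev a @ b))"
  shows "\<exists>W \<in> Wsep S E (elt S E a) (elt S E b).
           (\<not> (\<exists>W' \<in> Wsep S E (elt S E a) (elt S E b). wall_less S E (elt S E a) W' W)) \<and>
           finite {W' \<in> Wsep S E (elt S E a) (elt S E b). walls_intersect S E W W'} \<and>
           real (card {W' \<in> Wsep S E (elt S E a) (elt S E b). walls_intersect S E W W'})
             \<le> (2 * D + 1) * 4 powr D"
proof -
  interpret rac_words S E .
  have "\<langle>a\<rangle> \<noteq> \<langle>b\<rangle>" using assms(5) elem_rev_append_eq_Nil_iff[OF assms(3)] by simp
  then obtain m where m: "m \<in> Wsep S E \<langle>a\<rangle> \<langle>b\<rangle>" "\<forall>W \<in> Wsep S E \<langle>a\<rangle> \<langle>b\<rangle>. \<not> wall_less S E \<langle>a\<rangle> W m"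
    and few: "card {W \<in> Wsep S E \<langle>a\<rangle> \<langle>b\<rangle>. walls_intersect S E m W}
      \<le> (2 * nat \<lfloor>D\<rfloor> + 1) * 4 ^ nat \<lfloor>D\<rfloor>"
    using obtain_minimal_wall_few_intersecting assms(3,4,6) by blast
  have finite: "finite {W \<in> Wsep S E \<langle>a\<rangle> \<langle>b\<rangle>. walls_intersect S E m W}"
    using finite_Wsep[OF assms(3,4)] by simp
  from few have "real (card {W \<in> Wsep S E \<langle>a\<rangle> \<langle>b\<rangle>. walls_intersect S E m W})
      \<le> real ((2 * nat \<lfloor>D\<rfloor> + 1) * 4 ^ nat \<lfloor>D\<rfloor>)"
    by (simp only: of_nat_le_iff)
  also have "\<dots> \<le> (2 * D + 1) * 4 powr D"
    using assms(2) by (intro real_bound_floor_le_powr) simp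
  finally show ?thesis using m finite by blast
qed

end
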